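(* Let $G=(V,E)$ be a strongly connected directed graph with start $s$ and goal $g$, non-negative edge costs $f'_1,\dots,f'_n$, a monotone composition function $\beta$ defining path costs $f_i(P)=\beta(f'_i(e_1),f'_i(e_2),\dots)$, weights $w\in[0,1]^n$ and $\rho>0$. For any weight vector $w$, the Min-Max Cost Path algorithm described below returns an $s$–$g$ path $P^*\in\arg\min_P\left(\max_i w_i f_i(P)+\rho\sum_{i=1}^n f_i(P)\right)$, the minimum being over all paths from $s$ to $g$. Algorithm: initialize an open list containing the tuple $(0,s,(s))$. While the open list is nonempty: remove a tuple $(\mathit{cost},v,P)$ of minimum cost; if $v=g$, return $P$. Otherwise, for each neighbour $u$ of $v$: form $P^u=P$ extended by $u$; let $\mathcal P$ be the set of paths in the open list ending at $u$; if some $P'\in\mathcal P$ dominates $P^u$ or $P^u$ contains a cycle, skip $u$; otherwise delete from the open list all tuples whose path $P'$ ends at $u$ and is dominated by $P^u$, compute $c^{\max}(P^u)=\max_i w_i f_i(P^u)+\rho\sum_i f_i(P^u)$, and add $(c^{\max}(P^u),u,P^u)$ to the open list. If the open list becomes empty, return failure.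
   Context: A path is a sequence of distinct vertices consecutive pairs of which are edges of $G$. A path $P'$ dominates $P$ if $f_i(P')\le f_i(P)$ for all $i$ with strict inequality for some $i$. Monotonicity of $\beta$: extending a path never decreases any $f_i$, and whenever $f_i(P')\le f_i(P)$ for two paths ending at the same vertex $u$, then $f_i(P'\cup Q)\le f_i(P\cup Q)$ for every continuation $Q$ starting at $u$. *)

theory Defs
  imports Complex_Main
begin

definition is_path :: "('v \<Rightarrow> 'v \<Rightarrow> bool) \<Rightarrow> 'v list \<Rightarrow> bool" where
  "is_path E P \<longleftrightarrow> P \<noteq> [] \<and> distinct P \<and> (\<forall>k. Suc k < length P \<longrightarrow> E (P ! k) (P ! Suc k))"

definition st_path :: "('v \<Rightarrow> 'v \<Rightarrow> bool) \<Rightarrow> 'v \<Rightarrow> 'v \<Rightarrow> 'v list \<Rightarrow> bool" where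
  "st_path E s g P \<longleftrightarrow> is_path E P \<and> hd P = s \<and> last P = g"

definition pcost :: "(real list \<Rightarrow> real) \<Rightarrow> (nat \<Rightarrow> 'v \<Rightarrow> 'v \<Rightarrow> real) \<Rightarrow> nat \<Rightarrow> 'v list \<Rightarrow> real" where
  "pcost \<beta> f' i P = \<beta> (map (\<lambda>(a, b). f' i a b) (zip P (tl P)))"

definition dominates :: "nat \<Rightarrow> (nat \<Rightarrow> 'v list \<Rightarrow> real) \<Rightarrow> 'v list \<Rightarrow> 'v list \<Rightarrow> bool" where
  "dominates n f P' P \<longleftrightarrow> (\<forall>i<n. f i P' \<le> f i P) \<and> (\<exists>i<n. f i P' < f i P)"

definition cmax :: "nat \<Rightarrow> (nat \<Rightarrow> 'v list \<Rightarrow> real) \<Rightarrow> (nat \<Rightarrow> real) \<Rightarrow> real \<Rightarrow> 'v list \<Rightarrow> real" where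
  "cmax n f w \<rho> P = Max ((\<lambda>i. w i * f i P) ` {..<n}) + \<rho> * (\<Sum>i<n. f i P)"

type_synonym 'v openlist = "(real \<times> 'v \<times> 'v list) list"

definition process_nb ::
  "nat \<Rightarrow> (nat \<Rightarrow> 'v list \<Rightarrow> real) \<Rightarrow> (nat \<Rightarrow> real) \<Rightarrow> real \<Rightarrow> 'v list \<Rightarrow> 'v \<Rightarrow> 'v openlist \<Rightarrow> 'v openlist" where
  "process_nb n f w \<rho> P u OL =
     (let Pu = P @ [u] in
      if (\<exists>(c, x, P') \<in> set OL. last P' = u \<and> dominates n f P' Pu) \<or> \<not> distinct Pu then OL
      else filter (\<lambda>(c, x, P'). \<not> (last P' = u \<and> dominates n f Pu P')) OL @ [(cmax n f w \<rho> Pu, u, Pu)])"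

definition min_entry :: "'v openlist \<Rightarrow> (real \<times> 'v \<times> 'v list) \<Rightarrow> bool" where
  "min_entry OL t \<longleftrightarrow> t \<in> set OL \<and> (\<forall>t' \<in> set OL. fst t \<le> fst t')"

(* One iteration of the while loop that does not return: remove a minimum-cost tuple (c,v,P)
   with v \<noteq> g and process all neighbours of v (in an arbitrary order ns). *)
inductive mmcp_step ::
  "('v \<Rightarrow> 'v \<Rightarrow> bool) \<Rightarrow> 'v \<Rightarrow> nat \<Rightarrow> (nat \<Rightarrow> 'v list \<Rightarrow> real) \<Rightarrow> (nat \<Rightarrow> real) \<Rightarrow> real
   \<Rightarrow> 'v openlist \<Rightarrow> 'v openlist \<Rightarrow> bool"
  for E g n f w \<rho> where
  "\<lbrakk> min_entry OL (c, v, P); v \<noteq> g; distinct ns; set ns = {u. E v u} \<rbrakk> \<Longrightarrow>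
   mmcp_step E g n f w \<rho> OL (fold (process_nb n f w \<rho> P) ns (remove1 (c, v, P) OL))"

(* Result of the algorithm at a state where it stops: None = failure (empty open list),
   Some P = returned path (a minimum-cost tuple whose vertex is g was removed). *)
inductive mmcp_result :: "'v \<Rightarrow> 'v openlist \<Rightarrow> 'v list option \<Rightarrow> bool" for g where
  "mmcp_result g [] None"
| "min_entry OL (c, g, P) \<Longrightarrow> mmcp_result g OL (Some P)"

end

theory Submission
  imports Defs
begin

text \<open>
  Call a path expanded once its tuple has been removed from the open list and its neighbours
  processed. Throughout the search, the open and expanded paths start at \<open>s\<close>, every proper
  prefix of such a path is expanded, and every one-edge extension of an expanded path is weakly
  dominated by an open or expanded path with the same endpoint. Given any \<open>s\<close>-\<open>g\<close> path, replace
  its longest expanded prefix by such a dominating path, shortcutting at the last common vertex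
  when the two meet; monotonicity of \<open>\<beta>\<close> keeps every \<open>f\<^sub>i\<close> from increasing while the unexplored
  tail gets shorter. Hence some open path weakly dominates every \<open>s\<close>-\<open>g\<close> path, so the open list
  never runs empty and its minimal key is at most \<open>c\<^sup>m\<^sup>a\<^sup>x\<close> of every \<open>s\<close>-\<open>g\<close> path.
  The search terminates because each iteration expands a new simple path.
\<close>

section \<open>Simple paths\<close>

lemma is_path_iff_successively: "is_path E P \<longleftrightarrow> P \<noteq> [] \<and> distinct P \<and> successively E P"
  by (simp add: is_path_def successively_conv_nth)

lemma is_path_nonempty: "is_path E P \<Longrightarrow> P \<noteq> []"
  by (simp add: is_path_def)

lemma is_path_singleton [simp]: "is_path E [x]"
  by (simp add: is_path_iff_successively)

lemma is_path_append_iff: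
  "is_path E (xs @ ys) \<longleftrightarrow> (xs = [] \<longrightarrow> is_path E ys) \<and> (ys = [] \<longrightarrow> is_path E xs) \<and>
     (xs \<noteq> [] \<and> ys \<noteq> [] \<longrightarrow> is_path E xs \<and> is_path E ys \<and> set xs \<inter> set ys = {} \<and> E (last xs) (hd ys))"
  by (auto simp: is_path_iff_successively successively_append_iff)

lemma is_path_prefix: "is_path E (xs @ ys) \<Longrightarrow> xs \<noteq> [] \<Longrightarrow> is_path E xs"
  by (auto simp: is_path_append_iff)

lemma is_path_suffix: "is_path E (xs @ ys) \<Longrightarrow> ys \<noteq> [] \<Longrightarrow> is_path E ys"
  by (auto simp: is_path_append_iff)

lemma is_path_snoc: "is_path E xs \<Longrightarrow> E (last xs) u \<Longrightarrow> u \<notin> set xs \<Longrightarrow> is_path E (xs @ [u])"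
  by (auto simp: is_path_append_iff)

lemma is_path_join:
  "is_path E (xs @ [x]) \<Longrightarrow> is_path E (x # ys) \<Longrightarrow> set xs \<inter> set ys = {} \<Longrightarrow> is_path E (xs @ x # ys)"
  by (auto simp: is_path_iff_successively successively_append_iff successively_Cons)

lemma rtranclp_imp_is_path:
  assumes "E\<^sup>*\<^sup>* x y"
  obtains P where "is_path E P" "hd P = x" "last P = y"
  using assms
proof (induction arbitrary: thesis rule: converse_rtranclp_induct)
  case base
  then show ?case using is_path_singleton by fastforce
next
  case (step x z)
  obtain Q where Q: "is_path E Q" "hd Q = z" "last Q = y"
    using step.IH by blast
  then have "Q \<noteq> []" by (simp add: is_path_def)
  show ?case
  proof (cases "x \<in> set Q")
    case True
    then obtain A B where "Q = A @ x # B" by (meson split_list)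
    with Q show ?thesis by (intro step.prems[of "x # B"]) (auto dest: is_path_suffix)
  next
    case False
    with Q \<open>Q \<noteq> []\<close> step.hyps(1) have "is_path E ([x] @ Q)"
      by (subst is_path_append_iff) auto
    with Q \<open>Q \<noteq> []\<close> show ?thesis by (intro step.prems[of "x # Q"]) auto
  qed
qed

lemma set_path_subset:
  assumes "is_path E P" "hd P \<in> V" "\<And>x y. E x y \<Longrightarrow> x \<in> V \<and> y \<in> V"
  shows "set P \<subseteq> V"
proof
  fix x assume "x \<in> set P"
  then obtain k where k: "k < length P" "P ! k = x" by (meson in_set_conv_nth)
  show "x \<in> V"
  proof (cases k)
    case 0
    with k assms(1,2) show ?thesis by (simp add: hd_conv_nth is_path_def)
  next
    case (Suc j)
    with k assms(1) have "E (P ! j) x" by (auto simp: is_path_def)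
    with assms(3) show ?thesis by blast
  qed
qed

lemma finite_paths_from:
  assumes "finite V" "\<And>x y. E x y \<Longrightarrow> x \<in> V \<and> y \<in> V" "s \<in> V"
  shows "finite {P. is_path E P \<and> hd P = s}"
proof (rule finite_subset)
  show "{P. is_path E P \<and> hd P = s} \<subseteq> {xs. set xs \<subseteq> V \<and> distinct xs}"
    using set_path_subset[of E _ V] assms(2,3) by (auto simp: is_path_def)
qed (use assms(1) finite_subset_distinct in blast)

lemma st_path_loop: "st_path E s s Q \<Longrightarrow> Q = [s]"
  by (cases Q) (auto simp: st_path_def is_path_def split: if_splits)

section \<open>Dominance and the open list\<close>

definition weakly_dominates :: "nat \<Rightarrow> (nat \<Rightarrow> 'v list \<Rightarrow> real) \<Rightarrow> 'v list \<Rightarrow> 'v list \<Rightarrow> bool" where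
  "weakly_dominates n f P' P \<longleftrightarrow> (\<forall>i<n. f i P' \<le> f i P)"

lemma dominates_imp_weakly_dominates: "dominates n f P' P \<Longrightarrow> weakly_dominates n f P' P"
  by (simp add: dominates_def weakly_dominates_def)

lemma weakly_dominates_trans:
  "weakly_dominates n f P'' P' \<Longrightarrow> weakly_dominates n f P' P \<Longrightarrow> weakly_dominates n f P'' P"
  by (meson order_trans weakly_dominates_def)

lemma cmax_mono:
  assumes "\<And>i. i < n \<Longrightarrow> 0 \<le> w i" "0 \<le> \<rho>" "weakly_dominates n f P' P"
  shows "cmax n f w \<rho> P' \<le> cmax n f w \<rho> P"
proof -
  have le: "w i * f i P' \<le> w i * f i P" if "i < n" for i
    using assms that by (simp add: weakly_dominates_def mult_left_mono)
  have "Max ((\<lambda>i. w i * f i P') ` {..<n}) \<le> Max ((\<lambda>i. w i * f i P) ` {..<n})"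
  proof (cases "n = 0")
    case False
    have "w i * f i P' \<le> Max ((\<lambda>i. w i * f i P) ` {..<n})" if "i < n" for i
      using le[OF that] that by (auto intro: order.trans[OF _ Max_ge])
    with False show ?thesis by (subst Max_le_iff) auto
  qed simp
  moreover have "\<rho> * (\<Sum>i<n. f i P') \<le> \<rho> * (\<Sum>i<n. f i P)"
    using assms by (intro mult_left_mono sum_mono) (auto simp: weakly_dominates_def)
  ultimately show ?thesis by (simp add: cmax_def)
qed

definition entry_path :: "real \<times> 'v \<times> 'v list \<Rightarrow> 'v list" where
  "entry_path t = snd (snd t)"

lemma entry_path_simp [simp]: "entry_path (c, v, P) = P"
  by (simp add: entry_path_def)

definition open_paths :: "'v openlist \<Rightarrow> 'v list set" where
  "open_paths OL = entry_path ` set OL"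

definition covered :: "nat \<Rightarrow> (nat \<Rightarrow> 'v list \<Rightarrow> real) \<Rightarrow> 'v list set \<Rightarrow> 'v list \<Rightarrow> bool" where
  "covered n f S Y \<longleftrightarrow> (\<exists>P\<in>S. last P = last Y \<and> weakly_dominates n f P Y)"

lemma covered_mono: "covered n f S Y \<Longrightarrow> S \<subseteq> S' \<Longrightarrow> covered n f S' Y"
  by (auto simp: covered_def)

lemma distinct_map_remove1: "distinct (map h xs) \<Longrightarrow> distinct (map h (remove1 x xs))"
  by (auto simp: distinct_map intro: inj_on_diff)

lemma open_paths_remove1:
  "distinct (map entry_path OL) \<Longrightarrow> t \<in> set OL \<Longrightarrow>
   open_paths (remove1 t OL) = open_paths OL - {entry_path t}"
  by (auto simp: open_paths_def distinct_map inj_on_def)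

lemma set_process_nb:
  "t \<in> set (process_nb n f w \<rho> P u OL) \<Longrightarrow>
   t \<in> set OL \<or> (t = (cmax n f w \<rho> (P @ [u]), u, P @ [u]) \<and> distinct (P @ [u]))"
  by (auto simp: process_nb_def Let_def split: if_splits)

lemma set_fold_process_nb:
  "t \<in> set (fold (process_nb n f w \<rho> P) ns OL) \<Longrightarrow>
   t \<in> set OL \<or> (\<exists>u\<in>set ns. t = (cmax n f w \<rho> (P @ [u]), u, P @ [u]) \<and> distinct (P @ [u]))"
proof (induction ns arbitrary: OL)
  case (Cons u ns)
  then have "t \<in> set (process_nb n f w \<rho> P u OL) \<or>
    (\<exists>u'\<in>set ns. t = (cmax n f w \<rho> (P @ [u']), u', P @ [u']) \<and> distinct (P @ [u']))"
    by simp
  then show ?case by (auto dest: set_process_nb)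
qed simp

lemma distinct_fold_process_nb:
  "distinct ns \<Longrightarrow> distinct (map entry_path OL) \<Longrightarrow> (\<forall>u\<in>set ns. P @ [u] \<notin> open_paths OL) \<Longrightarrow>
   distinct (map entry_path (fold (process_nb n f w \<rho> P) ns OL))"
proof (induction ns arbitrary: OL)
  case (Cons u ns)
  let ?OL = "process_nb n f w \<rho> P u OL"
  have "distinct (map entry_path ?OL)"
    using Cons.prems by (auto simp: process_nb_def Let_def open_paths_def distinct_map_filter)
  moreover have "\<forall>u'\<in>set ns. P @ [u'] \<notin> open_paths ?OL"
    using Cons.prems by (fastforce simp: open_paths_def dest: set_process_nb)
  ultimately show ?case
    using Cons by simp
qed simp

lemma covered_process_nb:
  assumes "covered n f (open_paths OL) Y"
  shows "covered n f (open_paths (process_nb n f w \<rho> P u OL)) Y"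
proof -
  obtain c x Q where Q: "(c, x, Q) \<in> set OL" "last Q = last Y" "weakly_dominates n f Q Y"
    using assms by (auto simp: covered_def open_paths_def)
  show ?thesis
  proof (cases "last Q = u \<and> dominates n f (P @ [u]) Q")
    case True
    then have "weakly_dominates n f (P @ [u]) Y"
      using Q(3) by (blast intro: weakly_dominates_trans dominates_imp_weakly_dominates)
    with True Q show ?thesis
      by (force simp: process_nb_def Let_def covered_def open_paths_def)
  next
    case False
    with Q(1) have "(c, x, Q) \<in> set (process_nb n f w \<rho> P u OL)"
      by (simp add: process_nb_def Let_def)
    with Q show ?thesis by (force simp: covered_def open_paths_def)
  qed
qed

lemma covered_fold_process_nb:
  "covered n f (open_paths OL) Y \<Longrightarrow> covered n f (open_paths (fold (process_nb n f w \<rho> P) ns OL)) Y"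
  by (induction ns arbitrary: OL) (auto intro: covered_process_nb)

lemma covered_process_nb_new:
  "distinct (P @ [u]) \<Longrightarrow> covered n f (open_paths (process_nb n f w \<rho> P u OL)) (P @ [u])"
  by (force simp: process_nb_def Let_def covered_def open_paths_def weakly_dominates_def
      dest: dominates_imp_weakly_dominates)

lemma covered_fold_process_nb_new:
  "u \<in> set ns \<Longrightarrow> distinct (P @ [u]) \<Longrightarrow>
   covered n f (open_paths (fold (process_nb n f w \<rho> P) ns OL)) (P @ [u])"
proof (induction ns arbitrary: OL)
  case (Cons u' ns)
  show ?case
  proof (cases "u = u'")
    case True
    then have "covered n f (open_paths (process_nb n f w \<rho> P u' OL)) (P @ [u])"
      using Cons.prems(2) by (simp add: covered_process_nb_new)
    then show ?thesis by (simp add: covered_fold_process_nb)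
  qed (use Cons in simp)
qed simp

section \<open>Correctness of the search\<close>

locale mmcp_search =
  fixes E :: "'v \<Rightarrow> 'v \<Rightarrow> bool" and s g :: 'v
    and n :: nat and f :: "nat \<Rightarrow> 'v list \<Rightarrow> real" and w :: "nat \<Rightarrow> real" and \<rho> :: real
  assumes cost_mono_ext: "\<And>i P Q. i < n \<Longrightarrow> is_path E P \<Longrightarrow> is_path E (P @ Q) \<Longrightarrow> f i P \<le> f i (P @ Q)"
    and cost_mono_cont: "\<And>i P P' Q. i < n \<Longrightarrow> is_path E P \<Longrightarrow> is_path E P' \<Longrightarrow> last P = last P'
        \<Longrightarrow> is_path E Q \<Longrightarrow> hd Q = last P \<Longrightarrow> f i P' \<le> f i P
        \<Longrightarrow> f i (P' @ tl Q) \<le> f i (P @ tl Q)"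
    and weights_nonneg: "\<And>i. i < n \<Longrightarrow> 0 \<le> w i"
    and rho_nonneg: "0 \<le> \<rho>"
begin

abbreviation cost :: "'v list \<Rightarrow> real" where
  "cost \<equiv> cmax n f w \<rho>"

lemma cost_mono: "weakly_dominates n f P' P \<Longrightarrow> cost P' \<le> cost P"
  using cmax_mono weights_nonneg rho_nonneg by blast

lemma weakly_dominates_extension:
  "is_path E (P @ Q) \<Longrightarrow> P \<noteq> [] \<Longrightarrow> weakly_dominates n f P (P @ Q)"
  by (simp add: weakly_dominates_def cost_mono_ext is_path_prefix)

lemma weakly_dominates_continuation:
  assumes "is_path E Y" "is_path E P'" "last P' = last Y" "weakly_dominates n f P' Y"
    and "is_path E (last Y # T)" "set P' \<inter> set T = {}"
  shows "is_path E (P' @ T)" "weakly_dominates n f (P' @ T) (Y @ T)"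
proof -
  have "P' = butlast P' @ [last Y]"
    using assms(2,3) by (metis append_butlast_last_id is_path_nonempty)
  moreover have "set (butlast P') \<inter> set T = {}"
    using assms(6) in_set_butlastD by fastforce
  ultimately show "is_path E (P' @ T)"
    using assms(2,5) is_path_join by (metis append.assoc append_Cons append_Nil)
  show "weakly_dominates n f (P' @ T) (Y @ T)"
    using assms cost_mono_cont[of _ Y P' "last Y # T"] by (simp add: weakly_dominates_def)
qed

lemma weakly_dominates_shortcut:
  assumes path: "is_path E (Y @ u # T)" and P': "is_path E P'" "last P' = u"
    "weakly_dominates n f P' (Y @ [u])" and meet: "set P' \<inter> set T \<noteq> {}"
  obtains A x B D where "P' = (A @ [x]) @ B" "B \<noteq> []" "length D < length T"
    "is_path E ((A @ [x]) @ D)" "last ((A @ [x]) @ D) = last (Y @ u # T)"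
    "weakly_dominates n f ((A @ [x]) @ D) (Y @ u # T)"
proof -
  \<comment> \<open>Follow \<open>P'\<close> up to the last vertex \<open>x\<close> of \<open>T\<close> it visits, then the rest of \<open>T\<close>.\<close>
  obtain C x D where CD: "T = C @ x # D" "x \<in> set P'" "\<forall>z\<in>set D. z \<notin> set P'"
    using split_list_last_prop[of T "\<lambda>z. z \<in> set P'"] meet by blast
  obtain A B where AB: "P' = (A @ [x]) @ B"
    using CD(2) by (metis append.assoc append_Cons append_Nil split_list)
  have "x \<noteq> u"
    using path CD(1) by (auto simp: is_path_def)
  then have "B \<noteq> []"
    using AB P'(2) by auto
  have pAx: "is_path E (A @ [x])"
    using P'(1) AB is_path_prefix by blast
  let ?Z = "Y @ u # C @ [x]"
  have pZ: "is_path E ?Z" and pxD: "is_path E (x # D)"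
    using path CD(1) is_path_prefix[of E ?Z D] is_path_suffix[of E "Y @ u # C" "x # D"] by simp_all
  have "weakly_dominates n f (A @ [x]) P'"
    using AB P'(1) weakly_dominates_extension by blast
  moreover have "weakly_dominates n f (Y @ [u]) ?Z"
    using pZ weakly_dominates_extension[of "Y @ [u]" "C @ [x]"] by simp
  ultimately have "weakly_dominates n f (A @ [x]) ?Z"
    using P'(3) weakly_dominates_trans by blast
  moreover have "set (A @ [x]) \<inter> set D = {}"
    using CD(3) AB by auto
  ultimately have "is_path E ((A @ [x]) @ D)" "weakly_dominates n f ((A @ [x]) @ D) (?Z @ D)"
    using weakly_dominates_continuation[OF pZ pAx] pxD by simp_all
  moreover have "?Z @ D = Y @ u # T"
    using CD(1) by simp
  moreover have "last ((A @ [x]) @ D) = last (?Z @ D)"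
    by (cases "D = []") simp_all
  ultimately show ?thesis
    using that[of A x B D] AB \<open>B \<noteq> []\<close> CD(1) by simp
qed

text \<open>
  \<open>K\<close> is the set of expanded paths. The initial tuple carries the key \<open>0\<close> rather than the
  \<open>cmax\<close>-value of \<open>[s]\<close>.
\<close>
definition search_inv :: "'v openlist \<Rightarrow> 'v list set \<Rightarrow> bool" where
  "search_inv OL K \<longleftrightarrow>
    (\<forall>(c, v, P)\<in>set OL. is_path E P \<and> hd P = s \<and> v = last P \<and> (c = cost P \<or> OL = [(0, s, [s])])) \<and>
    (\<forall>P\<in>K. is_path E P \<and> hd P = s \<and> last P \<noteq> g) \<and>
    (\<forall>P\<in>open_paths OL \<union> K. \<forall>A B. P = A @ B \<and> A \<noteq> [] \<and> B \<noteq> [] \<longrightarrow> A \<in> K) \<and>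
    (\<forall>Y\<in>K. \<forall>u. is_path E (Y @ [u]) \<longrightarrow> covered n f (open_paths OL \<union> K) (Y @ [u])) \<and>
    distinct (map entry_path OL) \<and> open_paths OL \<inter> K = {} \<and> [s] \<in> open_paths OL \<union> K"

lemma search_inv_init: "search_inv [(0, s, [s])] {}"
  by (auto simp: search_inv_def open_paths_def Cons_eq_append_conv)

context
  fixes OL K
  assumes inv: "search_inv OL K"
begin

lemma open_entryD:
  "(c, v, P) \<in> set OL \<Longrightarrow> is_path E P \<and> hd P = s \<and> v = last P \<and> (c = cost P \<or> OL = [(0, s, [s])])"
  using inv by (auto simp: search_inv_def)

lemma expanded_pathD: "P \<in> K \<Longrightarrow> is_path E P \<and> hd P = s \<and> last P \<noteq> g"
  using inv by (simp add: search_inv_def)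

lemma known_pathD: "P \<in> open_paths OL \<union> K \<Longrightarrow> is_path E P \<and> hd P = s"
  using open_entryD expanded_pathD by (force simp: open_paths_def)

lemma proper_prefix_expanded: "A @ B \<in> open_paths OL \<union> K \<Longrightarrow> A \<noteq> [] \<Longrightarrow> B \<noteq> [] \<Longrightarrow> A \<in> K"
  using inv by (simp add: search_inv_def)

lemma expanded_extension_covered:
  "Y \<in> K \<Longrightarrow> is_path E (Y @ [u]) \<Longrightarrow> covered n f (open_paths OL \<union> K) (Y @ [u])"
  using inv by (simp add: search_inv_def)

lemma distinct_open_paths: "distinct (map entry_path OL)"
  using inv by (simp add: search_inv_def)

lemma open_expanded_disjoint: "open_paths OL \<inter> K = {}"
  using inv by (simp add: search_inv_def)

lemma singleton_known: "[s] \<in> open_paths OL \<union> K"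
  using inv by (simp add: search_inv_def)

lemma shorter_completion:
  assumes Y: "Y \<in> K" and path: "is_path E (Y @ T)" and goal: "last (Y @ T) = g"
  obtains Y' T' where "Y' \<in> open_paths OL \<union> K" "length T' < length T" "is_path E (Y' @ T')"
    "last (Y' @ T') = g" "weakly_dominates n f (Y' @ T') (Y @ T)"
proof -
  obtain u T2 where T: "T = u # T2"
    using Y goal expanded_pathD by (cases T) auto
  have Yu: "is_path E (Y @ [u])" and uT2: "is_path E (u # T2)"
    using path T is_path_prefix[of E "Y @ [u]" T2] is_path_suffix[of E Y "u # T2"] by simp_all
  obtain P' where P': "P' \<in> open_paths OL \<union> K" "last P' = u" "weakly_dominates n f P' (Y @ [u])"
    using expanded_extension_covered[OF Y Yu] by (auto simp: covered_def)
  have pP': "is_path E P'"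
    using P'(1) known_pathD by blast
  show ?thesis
  proof (cases "set P' \<inter> set T2 = {}")
    case True
    then have "is_path E (P' @ T2)" "weakly_dominates n f (P' @ T2) (Y @ T)"
      using weakly_dominates_continuation[OF Yu pP' _ P'(3) _ True] P'(2) uT2 T by simp_all
    moreover have "last (P' @ T2) = g"
      using goal T P'(2) by (cases "T2 = []") auto
    ultimately show ?thesis
      using that[of P' T2] P'(1) T by simp
  next
    case False
    have "is_path E (Y @ u # T2)"
      using path T by simp
    then obtain A x B D where AB: "P' = (A @ [x]) @ B" "B \<noteq> []" and D: "length D < length T2"
      "is_path E ((A @ [x]) @ D)" "last ((A @ [x]) @ D) = last (Y @ u # T2)"
      "weakly_dominates n f ((A @ [x]) @ D) (Y @ u # T2)"
      by (rule weakly_dominates_shortcut[OF _ pP' P'(2,3) False])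
    have "A @ [x] \<in> K"
      using proper_prefix_expanded P'(1) AB by blast
    with D show ?thesis
      using that[of "A @ [x]" D] goal T by simp
  qed
qed

lemma open_path_dominates_completion:
  "Y \<in> open_paths OL \<union> K \<Longrightarrow> is_path E (Y @ T) \<Longrightarrow> last (Y @ T) = g \<Longrightarrow>
   \<exists>P\<in>open_paths OL. weakly_dominates n f P (Y @ T)"
proof (induction "length T" arbitrary: Y T rule: less_induct)
  case less
  show ?case
  proof (cases "Y \<in> open_paths OL")
    case True
    moreover have "Y \<noteq> []"
      using less.prems(1) known_pathD is_path_nonempty by blast
    ultimately show ?thesis
      using less.prems(2) weakly_dominates_extension by blast
  next
    case False
    with less.prems(1) have "Y \<in> K" by blast
    then obtain Y' T' where Y': "Y' \<in> open_paths OL \<union> K" "length T' < length T"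
      "is_path E (Y' @ T')" "last (Y' @ T') = g" "weakly_dominates n f (Y' @ T') (Y @ T)"
      using shorter_completion less.prems(2,3) by blast
    then show ?thesis
      using less.hyps[OF Y'(2,1,3,4)] weakly_dominates_trans by blast
  qed
qed

lemma open_path_dominates_st_path:
  assumes "st_path E s g R"
  shows "\<exists>P\<in>open_paths OL. weakly_dominates n f P R"
proof -
  have "R = [s] @ tl R"
    using assms by (cases R) (auto simp: st_path_def is_path_def)
  then show ?thesis
    using assms open_path_dominates_completion[OF singleton_known, of "tl R"]
    by (metis st_path_def)
qed

end

context
  fixes OL K c v P ns OL'
  assumes inv: "search_inv OL K"
    and selected: "min_entry OL (c, v, P)" and not_goal: "v \<noteq> g"
    and neighbours: "set ns = {u. E v u}" and distinct_ns: "distinct ns"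
    and expansion: "OL' = fold (process_nb n f w \<rho> P) ns (remove1 (c, v, P) OL)"
begin

lemma selected_path: "is_path E P" "hd P = s" "v = last P" "P \<in> open_paths OL" "P \<notin> K"
proof -
  have "(c, v, P) \<in> set OL"
    using selected by (simp add: min_entry_def)
  then show "is_path E P" "hd P = s" "v = last P" "P \<in> open_paths OL"
    using open_entryD[OF inv] by (force simp: open_paths_def)+
  then show "P \<notin> K"
    using open_expanded_disjoint[OF inv] by blast
qed

lemma extension_unknown: "P @ [u] \<notin> open_paths OL \<union> K"
  using proper_prefix_expanded[OF inv, of P "[u]"] selected_path by (auto simp: is_path_def)

lemma open_paths_remaining: "open_paths (remove1 (c, v, P) OL) = open_paths OL - {P}"
  using selected distinct_open_paths[OF inv] open_paths_remove1 by (fastforce simp: min_entry_def)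

lemma entry_expandedD:
  "t \<in> set OL' \<Longrightarrow> t \<in> set (remove1 (c, v, P) OL) \<or>
     (\<exists>u. E v u \<and> t = (cost (P @ [u]), u, P @ [u]) \<and> distinct (P @ [u]))"
  using expansion neighbours by (auto dest: set_fold_process_nb)

lemma open_paths_expanded: "open_paths OL' \<subseteq> (open_paths OL - {P}) \<union> range (\<lambda>u. P @ [u])"
proof
  fix Q assume "Q \<in> open_paths OL'"
  then obtain t where t: "t \<in> set OL'" "Q = entry_path t"
    by (auto simp: open_paths_def)
  from entry_expandedD[OF t(1)] consider "t \<in> set (remove1 (c, v, P) OL)" | u where "t = (cost (P @ [u]), u, P @ [u])"
    by blast
  then show "Q \<in> (open_paths OL - {P}) \<union> range (\<lambda>u. P @ [u])"
  proof cases
    case 1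
    then have "Q \<in> open_paths (remove1 (c, v, P) OL)"
      using t(2) by (simp add: open_paths_def)
    then show ?thesis using open_paths_remaining by blast
  qed (use t(2) in simp)
qed

lemma open_entries_expanded:
  "\<forall>(c', v', P')\<in>set OL'. is_path E P' \<and> hd P' = s \<and> v' = last P' \<and> (c' = cost P' \<or> OL' = [(0, s, [s])])"
proof (clarify)
  fix c' v' P' assume t: "(c', v', P') \<in> set OL'"
  show "is_path E P' \<and> hd P' = s \<and> v' = last P' \<and> (c' = cost P' \<or> OL' = [(0, s, [s])])"
  proof (cases "(c', v', P') \<in> set (remove1 (c, v, P) OL)")
    case True
    then have "OL \<noteq> [(0, s, [s])]"
      using selected by (auto simp: min_entry_def)
    with True show ?thesis
      using open_entryD[OF inv] set_remove1_subset by fastforce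
  next
    case False
    then obtain u where "E v u" "(c', v', P') = (cost (P @ [u]), u, P @ [u])" "distinct (P @ [u])"
      using entry_expandedD t by blast
    then show ?thesis
      using selected_path is_path_snoc[of E P u] by (auto simp: is_path_def)
  qed
qed

lemma prefix_closed_expanded:
  assumes "Q \<in> open_paths OL' \<union> insert P K" "Q = A @ B" "A \<noteq> []" "B \<noteq> []"
  shows "A \<in> insert P K"
proof (cases "Q \<in> open_paths OL \<union> K")
  case True
  then show ?thesis using proper_prefix_expanded[OF inv] assms(2-4) by blast
next
  case False
  then obtain u where "A @ B = P @ [u]"
    using assms(1,2) open_paths_expanded selected_path(4) by blast
  then obtain B' where "P = A @ B'"
    using assms(4) by (metis append_butlast_last_id butlast_append butlast_snoc)
  then show ?thesis
    using proper_prefix_expanded[OF inv, of A B'] selected_path(4) assms(3) by (cases "B' = []") auto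
qed

lemma covered_expanded:
  assumes "covered n f (open_paths OL \<union> K) Y"
  shows "covered n f (open_paths OL' \<union> insert P K) Y"
proof -
  obtain Q where Q: "Q \<in> open_paths OL \<union> K" "last Q = last Y" "weakly_dominates n f Q Y"
    using assms by (auto simp: covered_def)
  show ?thesis
  proof (cases "Q \<in> insert P K")
    case False
    with Q have "covered n f (open_paths (remove1 (c, v, P) OL)) Y"
      using open_paths_remaining by (auto simp: covered_def)
    then have "covered n f (open_paths OL') Y"
      using expansion covered_fold_process_nb by blast
    then show ?thesis by (rule covered_mono) blast
  qed (use Q in \<open>auto simp: covered_def\<close>)
qed

lemma extension_covered_expanded:
  assumes "Y \<in> insert P K" "is_path E (Y @ [u])"
  shows "covered n f (open_paths OL' \<union> insert P K) (Y @ [u])"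
proof (cases "Y = P")
  case True
  with assms(2) have path: "is_path E (P @ [u])" by simp
  then have "u \<in> set ns"
    using neighbours selected_path(1,3) is_path_nonempty by (auto simp: is_path_append_iff)
  moreover have "distinct (P @ [u])"
    using path by (simp only: is_path_def)
  ultimately have "covered n f (open_paths OL') (P @ [u])"
    unfolding expansion by (rule covered_fold_process_nb_new)
  with True show ?thesis by (auto intro: covered_mono)
next
  case False
  with assms show ?thesis
    using expanded_extension_covered[OF inv] covered_expanded by blast
qed

lemma search_inv_expanded: "search_inv OL' (insert P K)"
proof -
  have "\<forall>Q\<in>insert P K. is_path E Q \<and> hd Q = s \<and> last Q \<noteq> g"
    using expanded_pathD[OF inv] selected_path(1-3) not_goal by auto
  moreover have "\<forall>Q\<in>open_paths OL' \<union> insert P K. \<forall>A B. Q = A @ B \<and> A \<noteq> [] \<and> B \<noteq> [] \<longrightarrow> A \<in> insert P K"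
    using prefix_closed_expanded by blast
  moreover have "\<forall>Y\<in>insert P K. \<forall>u. is_path E (Y @ [u]) \<longrightarrow> covered n f (open_paths OL' \<union> insert P K) (Y @ [u])"
    using extension_covered_expanded by blast
  moreover have "distinct (map entry_path OL')"
    unfolding expansion
    using distinct_ns distinct_map_remove1[OF distinct_open_paths[OF inv]]
      open_paths_remaining extension_unknown
    by (auto intro!: distinct_fold_process_nb)
  moreover have "open_paths OL' \<inter> insert P K = {}"
    using open_paths_expanded open_expanded_disjoint[OF inv] extension_unknown by fastforce
  moreover have "[s] \<in> open_paths OL' \<union> insert P K"
    using proper_prefix_expanded[OF inv, of "[s]" "tl P"] selected_path(1,2,4)
    by (cases P) (auto simp: is_path_def)
  ultimately show ?thesis
    using open_entries_expanded unfolding search_inv_def by (intro conjI)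
qed

end

lemma search_inv_step:
  assumes "search_inv OL K" "mmcp_step E g n f w \<rho> OL OL'"
  obtains P where "P \<notin> K" "search_inv OL' (insert P K)"
  using assms(2)
proof cases
  case (1 c v P ns)
  then show ?thesis
    using that search_inv_expanded[OF assms(1)] selected_path(5)[OF assms(1)] by blast
qed

lemma reachable_search_inv:
  "(mmcp_step E g n f w \<rho>)\<^sup>*\<^sup>* [(0, s, [s])] OL \<Longrightarrow> \<exists>K. search_inv OL K"
proof (induction rule: rtranclp_induct)
  case (step OL OL')
  then obtain K where "search_inv OL K" by blast
  then obtain P where "search_inv OL' (insert P K)"
    using search_inv_step step.hyps(2) by blast
  then show ?case ..
qed (use search_inv_init in blast)

lemma mmcp_no_infinite_run:
  assumes "finite {P. is_path E P \<and> hd P = s}"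
  shows "\<nexists>X. X 0 = [(0, s, [s])] \<and> (\<forall>k. mmcp_step E g n f w \<rho> (X k) (X (Suc k)))"
proof
  assume "\<exists>X. X 0 = [(0, s, [s])] \<and> (\<forall>k. mmcp_step E g n f w \<rho> (X k) (X (Suc k)))"
  then obtain X where X0: "X 0 = [(0, s, [s])]" and XS: "\<And>k. mmcp_step E g n f w \<rho> (X k) (X (Suc k))"
    by blast
  have "\<exists>K. search_inv (X k) K \<and> finite K \<and> card K = k" for k
  proof (induction k)
    case 0
    then show ?case using X0 search_inv_init by auto
  next
    case (Suc k)
    then obtain K where K: "search_inv (X k) K" "finite K" "card K = k" by blast
    obtain P where "P \<notin> K" "search_inv (X (Suc k)) (insert P K)"
      using search_inv_step[OF K(1) XS] .
    with K(2,3) show ?case by (intro exI[of _ "insert P K"]) simp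
  qed
  then obtain K where K: "search_inv (X (Suc (card {P. is_path E P \<and> hd P = s}))) K"
    "card K = Suc (card {P. is_path E P \<and> hd P = s})"
    by blast
  from K(1) have "K \<subseteq> {P. is_path E P \<and> hd P = s}"
    using expanded_pathD by blast
  then have "card K \<le> card {P. is_path E P \<and> hd P = s}"
    by (rule card_mono[OF assms])
  with K(2) show False by simp
qed

lemma mmcp_result_optimal:
  assumes "E\<^sup>*\<^sup>* s g" and "(mmcp_step E g n f w \<rho>)\<^sup>*\<^sup>* [(0, s, [s])] OL" and "mmcp_result g OL res"
  shows "\<exists>P. res = Some P \<and> st_path E s g P \<and> (\<forall>Q. st_path E s g Q \<longrightarrow> cost P \<le> cost Q)"
proof -
  obtain K where inv: "search_inv OL K"
    using reachable_search_inv assms(2) by blast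
  obtain R where "is_path E R" "hd R = s" "last R = g"
    using rtranclp_imp_is_path[OF assms(1)] .
  then have "st_path E s g R"
    by (simp add: st_path_def)
  then have "OL \<noteq> []"
    using open_path_dominates_st_path[OF inv] by (auto simp: open_paths_def)
  with assms(3) obtain c P where selected: "min_entry OL (c, g, P)" and res: "res = Some P"
    by (cases rule: mmcp_result.cases) auto
  then have entry: "(c, g, P) \<in> set OL" "\<forall>t\<in>set OL. c \<le> fst t"
    by (simp_all add: min_entry_def)
  from open_entryD[OF inv entry(1)]
  have P: "st_path E s g P" "c = cost P \<or> OL = [(0, s, [s])]"
    by (auto simp: st_path_def)
  have "cost P \<le> cost Q" if Q: "st_path E s g Q" for Q
  proof (cases "OL = [(0, s, [s])]")
    case True
    with entry(1) have "g = s" "P = [s]" by auto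
    then show ?thesis using Q st_path_loop[of E s Q] by simp
  next
    case False
    obtain c' v' P' where P': "(c', v', P') \<in> set OL" "weakly_dominates n f P' Q"
      using open_path_dominates_st_path[OF inv Q] by (auto simp: open_paths_def)
    have "cost P = c" using P(2) False by simp
    also have "\<dots> \<le> fst (c', v', P')" using entry(2) P'(1) by blast
    also have "\<dots> = cost P'" using open_entryD[OF inv P'(1)] False by simp
    also have "\<dots> \<le> cost Q" using P'(2) by (rule cost_mono)
    finally show ?thesis .
  qed
  with res P(1) show ?thesis by blast
qed

end

theorem mainTheorem3:
  fixes V :: "'v set" and E :: "'v \<Rightarrow> 'v \<Rightarrow> bool" and s g :: 'v
    and n :: nat and f' :: "nat \<Rightarrow> 'v \<Rightarrow> 'v \<Rightarrow> real" and \<beta> :: "real list \<Rightarrow> real"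
    and w :: "nat \<Rightarrow> real" and \<rho> :: real
  defines "f \<equiv> pcost \<beta> f'"
  assumes finV: "finite V"
    and edges_in: "\<And>x y. E x y \<Longrightarrow> x \<in> V \<and> y \<in> V"
    and strong: "\<And>x y. x \<in> V \<Longrightarrow> y \<in> V \<Longrightarrow> E\<^sup>*\<^sup>* x y"
    and sV: "s \<in> V" and gV: "g \<in> V"
    and n_pos: "n \<ge> 1"
    and nonneg: "\<And>i x y. i < n \<Longrightarrow> E x y \<Longrightarrow> f' i x y \<ge> 0"
    and mono_ext: "\<And>i P Q. i < n \<Longrightarrow> is_path E P \<Longrightarrow> is_path E (P @ Q) \<Longrightarrow> f i P \<le> f i (P @ Q)"
    and mono_cont: "\<And>i P P' Q. i < n \<Longrightarrow> is_path E P \<Longrightarrow> is_path E P' \<Longrightarrow> last P = last P'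
        \<Longrightarrow> is_path E Q \<Longrightarrow> hd Q = last P \<Longrightarrow> f i P' \<le> f i P
        \<Longrightarrow> f i (P' @ tl Q) \<le> f i (P @ tl Q)"
    and w_range: "\<And>i. i < n \<Longrightarrow> 0 \<le> w i \<and> w i \<le> 1"
    and rho_pos: "\<rho> > 0"
  shows "(\<nexists>X. X 0 = [(0, s, [s])] \<and> (\<forall>k. mmcp_step E g n f w \<rho> (X k) (X (Suc k))))
       \<and> (\<forall>OL res. (mmcp_step E g n f w \<rho>)\<^sup>*\<^sup>* [(0, s, [s])] OL \<and> mmcp_result g OL res \<longrightarrow>
            (\<exists>P. res = Some P \<and> st_path E s g P \<and>
                 (\<forall>Q. st_path E s g Q \<longrightarrow> cmax n f w \<rho> P \<le> cmax n f w \<rho> Q)))"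
proof -
  interpret mmcp_search E s g n f w \<rho>
    using mono_ext mono_cont w_range rho_pos by unfold_locales auto
  show ?thesis
    using mmcp_no_infinite_run[OF finite_paths_from[OF finV edges_in sV]]
      mmcp_result_optimal[OF strong[OF sV gV]] by blast
qed

end
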